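(* Let $L$ be a finite lattice. If $L$ is shellable, then its facet adjacency graph $FA(L)$ does not have two disjoint source sets.
   Context: The order complex of $L$ has the chains of $L$ as faces; $L$ is shellable if its facets (maximal chains) admit a linear order $F_1,\dots,F_k$ such that for each $j<k$, $\big(\bigcup_{i\le j}\langle F_i\rangle\big)\cap\langle F_{j+1}\rangle$ is pure of dimension $|F_{j+1}|-2$, with $\langle F\rangle$ the set of subsets of $F$. The facet adjacency graph $FA(L)$ is the directed graph whose vertices are the maximal chains of $L$, with an edge $F\to G$ whenever $|F\cap G|=|G|-1$. A source set of a directed graph with vertex set $V$ is a nonempty proper subset $X\subsetneq V$ such that there is no edge $y\to x$ with $y\notin X$ and $x\in X$. *)

theory Defs
  imports Main
begin

text \<open>Chains of a (finite) lattice, given as a type of class lattice + finite;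
  the faces of the order complex are the chains.\<close>

definition is_chain :: "'a::order set \<Rightarrow> bool" where
  "is_chain C \<longleftrightarrow> (\<forall>x\<in>C. \<forall>y\<in>C. x \<le> y \<or> y \<le> x)"

text \<open>Facets of the order complex = maximal chains.\<close>
definition maximal_chains :: "'a::order set set" where
  "maximal_chains = {C. is_chain C \<and> (\<forall>D. is_chain D \<and> C \<subseteq> D \<longrightarrow> D = C)}"

definition pure_of_dim :: "'b set set \<Rightarrow> int \<Rightarrow> bool" where
  "pure_of_dim \<Delta> d \<longleftrightarrow>
     (\<forall>G\<in>\<Delta>. (\<forall>H\<in>\<Delta>. G \<subseteq> H \<longrightarrow> H = G) \<longrightarrow> int (card G) - 1 = d)"

text \<open>Shellability of the order complex: a linear order F_1,...,F_k (list, 0-indexed)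
  of all facets such that for each j < k, (\<Union>_{i\<le>j} <F_i>) \<inter> <F_{j+1}> is pure of
  dimension |F_{j+1}| - 2.\<close>
definition shellable :: "'a::{finite,lattice} itself \<Rightarrow> bool" where
  "shellable _ \<longleftrightarrow> (\<exists>Fs :: 'a set list.
      distinct Fs \<and> set Fs = maximal_chains \<and>
      (\<forall>j. Suc j < length Fs \<longrightarrow>
         pure_of_dim ((\<Union>i\<le>j. Pow (Fs ! i)) \<inter> Pow (Fs ! Suc j))
                     (int (card (Fs ! Suc j)) - 2)))"

definition FA_edges :: "('a::{finite,lattice} set \<times> 'a set) set" where
  "FA_edges = {(F, G). F \<in> maximal_chains \<and> G \<in> maximal_chains \<and>
                        int (card (F \<inter> G)) = int (card G) - 1}"

definition is_source_set :: "'v set \<Rightarrow> ('v \<times> 'v) set \<Rightarrow> 'v set \<Rightarrow> bool" where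
  "is_source_set V E X \<longleftrightarrow> X \<noteq> {} \<and> X \<subset> V \<and>
     \<not> (\<exists>y x. (y, x) \<in> E \<and> y \<notin> X \<and> x \<in> X)"

end

theory Submission
  imports Defs
begin

text \<open>In a shelling \<open>F\<^sub>0, F\<^sub>1, \<dots>\<close>, the complex \<open>\<Delta> = (\<Union>i\<le>j. Pow F\<^sub>i) \<inter> Pow F\<^sub>j\<^sub>+\<^sub>1\<close>
  contains every \<open>F\<^sub>i \<inter> F\<^sub>j\<^sub>+\<^sub>1\<close>, and each face of \<open>\<Delta>\<close> lies in one of them; so the
  facets of \<open>\<Delta>\<close> are among these sets, and purity of dimension \<open>|F\<^sub>j\<^sub>+\<^sub>1| - 2\<close> yields some
  \<open>i \<le> j\<close> with \<open>|F\<^sub>i \<inter> F\<^sub>j\<^sub>+\<^sub>1| = |F\<^sub>j\<^sub>+\<^sub>1| - 1\<close>, an edge \<open>F\<^sub>i \<rightarrow> F\<^sub>j\<^sub>+\<^sub>1\<close> of \<open>FA(L)\<close>.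
  A source set is closed under predecessors, so following such edges backwards from any
  of its members shows that it contains \<open>F\<^sub>0\<close>. Hence any two source sets meet.\<close>

lemma pure_codim_one_intersection:
  fixes A :: "nat \<Rightarrow> 'b set"
  assumes "finite B"
    and "pure_of_dim ((\<Union>i\<le>j. Pow (A i)) \<inter> Pow B) (int (card B) - 2)"
  shows "\<exists>i\<le>j. int (card (A i \<inter> B)) = int (card B) - 1"
proof -
  define D where "D = (\<Union>i\<le>j. Pow (A i)) \<inter> Pow B"
  have "finite D"
    using \<open>finite B\<close> unfolding D_def by (simp add: finite_subset)
  moreover have "{} \<in> D"
    unfolding D_def by blast
  ultimately obtain G where "G \<in> D" and G_maximal: "\<forall>H\<in>D. G \<subseteq> H \<longrightarrow> H = G"
    using finite_has_maximal[of D] by blast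
  then obtain i where "i \<le> j" "G \<subseteq> A i \<inter> B"
    unfolding D_def by blast
  moreover have "A i \<inter> B \<in> D"
    using \<open>i \<le> j\<close> unfolding D_def by blast
  ultimately have "A i \<inter> B = G"
    using G_maximal by blast
  moreover have "int (card G) - 1 = int (card B) - 2"
    using assms(2) \<open>G \<in> D\<close> G_maximal unfolding D_def pure_of_dim_def by blast
  ultimately show ?thesis
    using \<open>i \<le> j\<close> by auto
qed

lemma shellable_FA_edge_from_earlier:
  assumes "shellable TYPE('a::{finite,lattice})"
  obtains Fs :: "'a::{finite,lattice} set list"
  where "set Fs = maximal_chains"
    and "\<And>j. Suc j < length Fs \<Longrightarrow> \<exists>i\<le>j. (Fs ! i, Fs ! Suc j) \<in> FA_edges"
proof -
  obtain Fs :: "'a set list" where Fs: "set Fs = maximal_chains"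
    and pure: "\<And>j. Suc j < length Fs \<Longrightarrow>
       pure_of_dim ((\<Union>i\<le>j. Pow (Fs ! i)) \<inter> Pow (Fs ! Suc j)) (int (card (Fs ! Suc j)) - 2)"
    using assms unfolding shellable_def by blast
  have "\<exists>i\<le>j. (Fs ! i, Fs ! Suc j) \<in> FA_edges" if j: "Suc j < length Fs" for j
  proof -
    obtain i where "i \<le> j"
      and card_eq: "int (card (Fs ! i \<inter> Fs ! Suc j)) = int (card (Fs ! Suc j)) - 1"
      using pure_codim_one_intersection[OF finite pure[OF j]] by blast
    have "Fs ! i \<in> maximal_chains" "Fs ! Suc j \<in> maximal_chains"
      using \<open>i \<le> j\<close> j Fs nth_mem by fastforce+
    with card_eq show ?thesis
      using \<open>i \<le> j\<close> unfolding FA_edges_def by auto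
  qed
  with Fs that show ?thesis by blast
qed

lemma source_set_contains_first_vertex:
  assumes "set vs = V"
    and earlier_edge: "\<And>j. Suc j < length vs \<Longrightarrow> \<exists>i\<le>j. (vs ! i, vs ! Suc j) \<in> E"
    and source: "is_source_set V E X"
  shows "vs ! 0 \<in> X"
proof -
  have "vs ! 0 \<in> X" if "k < length vs" "vs ! k \<in> X" for k
    using that
  proof (induction k rule: less_induct)
    case (less k)
    show ?case
    proof (cases k)
      case 0
      with less.prems show ?thesis by simp
    next
      case (Suc j)
      with less.prems obtain i where "i \<le> j" "(vs ! i, vs ! k) \<in> E"
        using earlier_edge by blast
      with less.prems source have "vs ! i \<in> X"
        unfolding is_source_set_def by blast
      moreover have "i < k"
        using \<open>i \<le> j\<close> Suc by simp
      ultimately show ?thesis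
        using less.IH less.prems(1) by simp
    qed
  qed
  moreover obtain x where "x \<in> X" "x \<in> V"
    using source unfolding is_source_set_def by blast
  ultimately show ?thesis
    using \<open>set vs = V\<close> by (metis in_set_conv_nth)
qed

theorem lemma3p30:
  assumes "shellable TYPE('a::{finite,lattice})"
  shows "\<not> (\<exists>X Y. is_source_set (maximal_chains :: 'a set set) FA_edges X \<and>
                  is_source_set (maximal_chains :: 'a set set) FA_edges Y \<and> X \<inter> Y = {})"
proof
  assume "\<exists>X Y. is_source_set (maximal_chains :: 'a set set) FA_edges X \<and>
                  is_source_set (maximal_chains :: 'a set set) FA_edges Y \<and> X \<inter> Y = {}"
  then obtain X Y where X: "is_source_set (maximal_chains :: 'a set set) FA_edges X"
    and Y: "is_source_set (maximal_chains :: 'a set set) FA_edges Y" and "X \<inter> Y = {}"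
    by blast
  obtain Fs :: "'a set list" where "set Fs = maximal_chains"
    and "\<And>j. Suc j < length Fs \<Longrightarrow> \<exists>i\<le>j. (Fs ! i, Fs ! Suc j) \<in> FA_edges"
    using shellable_FA_edge_from_earlier[OF assms] by blast
  then have "Fs ! 0 \<in> X" "Fs ! 0 \<in> Y"
    using source_set_contains_first_vertex X Y by blast+
  with \<open>X \<inter> Y = {}\<close> show False by blast
qed

end
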